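(* Let $\mathcal{C}_7=\{0,2,8,12,20,22,28,30,40,42,48,50,58,62,68\}$. Every pair of primes $(3t-2,3t+2)$ with $t$ an odd integer and $3t-2\geq 103$ is of the form $(3s-2,3s+2)$ with $s=5\cdot 7(2n+1)+c$ for some integer $n\geq 0$ and some $c\in\mathcal{C}_7$. *)

theory Defs
  imports "HOL-Computational_Algebra.Primes"
begin

definition C7 :: "int set" where
  "C7 = {0,2,8,12,20,22,28,30,40,42,48,50,58,62,68}"

end

theory Submission
  imports Defs
begin

text \<open>Write \<open>t = 35(2n + 1) + c\<close> with \<open>0 \<le> c < 70\<close>. Since \<open>35\<close> is odd, \<open>c\<close> is even, and since
  \<open>c \<equiv> t (mod 35)\<close>, the numbers \<open>3c \<pm> 2\<close> are divisible by \<open>5\<close> or \<open>7\<close> only if the primes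
  \<open>3t \<pm> 2 \<ge> 103\<close> are. The even residues below \<open>70\<close> avoiding these divisibilities are
  exactly the elements of \<open>C7\<close>.\<close>

lemma prime_not_dvd_int:
  fixes p q :: int
  assumes "prime q" "1 < p" "p < q"
  shows "\<not> p dvd q"
proof
  assume "p dvd q"
  moreover have "0 \<le> p" using assms(2) by simp
  ultimately have "p = 1 \<or> p = q" using assms(1) unfolding prime_int_iff by blast
  then show False using assms(2,3) by simp
qed

lemma dvd_affine_iff_of_dvd_diff:
  fixes p t c a k :: int
  assumes "p dvd t - c"
  shows "p dvd a*t + k \<longleftrightarrow> p dvd a*c + k"
proof -
  have "a*t + k = a*(t - c) + (a*c + k)" by (simp add: algebra_simps)
  moreover have "p dvd a*(t - c)" using assms by simp
  ultimately show ?thesis by (simp only: dvd_add_right_iff)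
qed

lemma C7_memI:
  fixes c :: int
  assumes "0 \<le> c" "c < 70" "even c"
    and "\<not> 5 dvd 3*c - 2" "\<not> 5 dvd 3*c + 2" "\<not> 7 dvd 3*c - 2" "\<not> 7 dvd 3*c + 2"
  shows "c \<in> C7"
proof -
  have "c \<in> set [0..69]" using assms(1,2) by simp
  then show ?thesis using assms(3-) unfolding C7_def by (auto simp: upto_rec1)
qed

theorem proposition3p5:
  fixes t :: int
  assumes "odd t" and "prime (3*t - 2)" and "prime (3*t + 2)" and "3*t - 2 \<ge> 103"
  shows "\<exists>s n c. (3*t - 2, 3*t + 2) = (3*s - 2, 3*s + 2) \<and>
                 s = 5 * 7 * (2*n + 1) + c \<and> n \<ge> 0 \<and> c \<in> C7"
proof -
  define n where "n = (t - 35) div 70"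
  define c where "c = (t - 35) mod 70"
  have t_eq: "t = 35 * (2*n + 1) + c" unfolding n_def c_def by simp
  have "n \<ge> 0" unfolding n_def using assms(4) by simp
  have not_dvd: "\<not> p dvd 3*c + k" if "p \<in> {5, 7}" "k \<in> {-2, 2}" for p k
  proof -
    have "prime (3*t + k)" using that(2) assms(2,3) by auto
    moreover have "1 < p" "p < 3*t + k" using that assms(4) by auto
    ultimately have "\<not> p dvd 3*t + k" using prime_not_dvd_int by blast
    moreover have "p dvd t - c" using that(1) t_eq by auto
    ultimately show ?thesis using dvd_affine_iff_of_dvd_diff by blast
  qed
  have "c \<in> C7"
  proof (rule C7_memI)
    show "0 \<le> c" "c < 70" unfolding c_def by simp_all
    show "even c" using assms(1) t_eq by simp
    show "\<not> 5 dvd 3*c - 2" "\<not> 5 dvd 3*c + 2" "\<not> 7 dvd 3*c - 2" "\<not> 7 dvd 3*c + 2"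
      using not_dvd[of 5 "-2"] not_dvd[of 5 2] not_dvd[of 7 "-2"] not_dvd[of 7 2] by simp_all
  qed
  then show ?thesis using t_eq \<open>n \<ge> 0\<close> by (intro exI[of _ t] exI[of _ n] exI[of _ c]) simp
qed

end
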